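(* Let $M$ be a matroid on $E=[n]$, $t,u$ positive integers, $\mathcal F$ the regular mixed subdivision defined below. For an ordered partition $(X,Y)$ of $[n]\setminus\{1\}$ let $T_{(X,Y)}=\mathbf e_{B}+u\Delta_{\{1\}\cup X}+t\nabla_{\{1\}\cup Y}$ be the top-degree face of $\mathcal F$ indexed by it ($B$ the unique basis making this a top-degree face). Let $(X_1,Y_1)\ne(X_2,Y_2)$ be two such partitions whose top-degree faces $T_1,T_2$ contain a common point $p$, and let $(X_3,Y_3)$ be a partition of $[n]\setminus\{1\}$ with $X_1\cap X_2\subseteq X_3$ and $Y_1\cap Y_2\subseteq Y_3$. Then $p\in T_3=T_{(X_3,Y_3)}$, and the bases of $T_1,T_2,T_3$ all coincide.
   Context: $M$ is a matroid on $E=[n]=\{1,\dots,n\}$. $P(M)\subseteq\mathbb R^E$ is the convex hull of the indicator vectors $\mathbf e_B$ of bases $B$. For nonempty $S\subseteq E$, $\Delta_S=\operatorname{conv}\{\mathbf e_i:i\in S\}$, $\nabla_S=-\Delta_S$, $\Delta=\Delta_E$, $\nabla=\nabla_E$. The subdivision: fix reals $0<\alpha_1<\dots<\alpha_n$, $0<\beta_1<\dots<\beta_n$; let $\mathit{Lift}=\operatorname{conv}\{(u\mathbf e_i,\alpha_i)\}+(P(M)\times\{0\})+\operatorname{conv}\{(-t\mathbf e_i,\beta_i)\}\subseteq\mathbb R^E\times\mathbb R$. The lower faces of $\mathit{Lift}$ are the faces on which some linear functional with last coordinate $-1$ attains its maximum; their projections to $\mathbb R^E$ form the regular mixed subdivision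 $\mathcal F$ of $u\Delta+P(M)+t\nabla$. Each cell is canonically written $F+G+H$ (projections of the faces of the three summands of $\mathit{Lift}$ maximizing the same functional), with $F$ a face of $u\Delta$, $G$ a face of $P(M)$, $H$ a face of $t\nabla$. A top-degree face is a maximal cell $F+G+H$ of $\mathcal F$ with $G$ a vertex of $P(M)$. For each $X,Y$ with $X\cup Y=E$, $X\cap Y=\{1\}$ there is a unique basis $B$ such that $u\Delta_X+\mathbf e_B+t\nabla_Y$ is a top-degree face. *)

theory Defs
  imports Main "HOL-Analysis.Analysis"
begin

text \<open>Points of R^E, E = {1..n}, are functions nat => real (only coordinates 1..n matter;
  all points below vanish outside {1..n}).  Points of R^E x R are pairs.\<close>

definition matroid_bases :: "nat \<Rightarrow> nat set set \<Rightarrow> bool" where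
  "matroid_bases n Bs \<longleftrightarrow> Bs \<noteq> {} \<and> (\<forall>B\<in>Bs. B \<subseteq> {1..n}) \<and>
     (\<forall>B1\<in>Bs. \<forall>B2\<in>Bs. \<forall>x\<in>B1 - B2. \<exists>y\<in>B2 - B1. insert y (B1 - {x}) \<in> Bs)"

definition cvx :: "(nat \<Rightarrow> real) set \<Rightarrow> (nat \<Rightarrow> real) set" where
  "cvx V = {x. \<exists>w. (\<forall>v\<in>V. 0 \<le> w v) \<and> (\<Sum>v\<in>V. w v) = 1 \<and> x = (\<lambda>i. \<Sum>v\<in>V. w v * v i)}"

definition cvxL :: "((nat \<Rightarrow> real) \<times> real) set \<Rightarrow> ((nat \<Rightarrow> real) \<times> real) set" where
  "cvxL V = {x. \<exists>w. (\<forall>v\<in>V. 0 \<le> w v) \<and> (\<Sum>v\<in>V. w v) = 1 \<and>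
                 x = ((\<lambda>i. \<Sum>v\<in>V. w v * fst v i), (\<Sum>v\<in>V. w v * snd v))}"

definition msum :: "(nat \<Rightarrow> real) set \<Rightarrow> (nat \<Rightarrow> real) set \<Rightarrow> (nat \<Rightarrow> real) set" where
  "msum S T = {(\<lambda>i. x i + y i) | x y. x \<in> S \<and> y \<in> T}"

definition msumL :: "((nat \<Rightarrow> real) \<times> real) set \<Rightarrow> ((nat \<Rightarrow> real) \<times> real) set
    \<Rightarrow> ((nat \<Rightarrow> real) \<times> real) set" where
  "msumL S T = {((\<lambda>i. fst x i + fst y i), snd x + snd y) | x y. x \<in> S \<and> y \<in> T}"

definition sev :: "real \<Rightarrow> nat \<Rightarrow> (nat \<Rightarrow> real)" where
  "sev c i = (\<lambda>j. if j = i then c else 0)"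

definition indvec :: "nat set \<Rightarrow> (nat \<Rightarrow> real)" where
  "indvec B = (\<lambda>j. if j \<in> B then 1 else 0)"

text \<open>c * Delta_S = conv { c e_i : i in S };  so u Delta_S = sdelta u S and t Nabla_S = sdelta (-t) S.\<close>
definition sdelta :: "real \<Rightarrow> nat set \<Rightarrow> (nat \<Rightarrow> real) set" where
  "sdelta c S = cvx (sev c ` S)"

definition matroid_polytope :: "nat set set \<Rightarrow> (nat \<Rightarrow> real) set" where
  "matroid_polytope Bs = cvx (indvec ` Bs)"

definition liftA :: "nat \<Rightarrow> (nat \<Rightarrow> real) \<Rightarrow> nat \<Rightarrow> ((nat \<Rightarrow> real) \<times> real) set" where
  "liftA n \<alpha> u = cvxL ((\<lambda>i. (sev (real u) i, \<alpha> i)) ` {1..n})"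

definition liftP :: "nat set set \<Rightarrow> ((nat \<Rightarrow> real) \<times> real) set" where
  "liftP Bs = (\<lambda>x. (x, 0)) ` matroid_polytope Bs"

definition liftC :: "nat \<Rightarrow> (nat \<Rightarrow> real) \<Rightarrow> nat \<Rightarrow> ((nat \<Rightarrow> real) \<times> real) set" where
  "liftC n \<beta> t = cvxL ((\<lambda>i. (sev (- real t) i, \<beta> i)) ` {1..n})"

definition Lift :: "nat \<Rightarrow> nat set set \<Rightarrow> (nat \<Rightarrow> real) \<Rightarrow> (nat \<Rightarrow> real) \<Rightarrow> nat \<Rightarrow> nat
    \<Rightarrow> ((nat \<Rightarrow> real) \<times> real) set" where
  "Lift n Bs \<alpha> \<beta> u t = msumL (liftA n \<alpha> u) (msumL (liftP Bs) (liftC n \<beta> t))"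

definition lfun :: "nat \<Rightarrow> (nat \<Rightarrow> real) \<Rightarrow> (nat \<Rightarrow> real) \<times> real \<Rightarrow> real" where
  "lfun n c z = (\<Sum>i\<in>{1..n}. c i * fst z i) - snd z"

definition maxface :: "nat \<Rightarrow> (nat \<Rightarrow> real) \<Rightarrow> ((nat \<Rightarrow> real) \<times> real) set
    \<Rightarrow> ((nat \<Rightarrow> real) \<times> real) set" where
  "maxface n c S = {z \<in> S. \<forall>w\<in>S. lfun n c w \<le> lfun n c z}"

text \<open>The cell of the regular mixed subdivision F given by the lower face for c,
  and its canonical summands F_c + G_c + H_c.\<close>
definition cell :: "nat \<Rightarrow> nat set set \<Rightarrow> (nat \<Rightarrow> real) \<Rightarrow> (nat \<Rightarrow> real) \<Rightarrow> nat \<Rightarrow> nat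
    \<Rightarrow> (nat \<Rightarrow> real) \<Rightarrow> (nat \<Rightarrow> real) set" where
  "cell n Bs \<alpha> \<beta> u t c = fst ` maxface n c (Lift n Bs \<alpha> \<beta> u t)"

definition cellF :: "nat \<Rightarrow> (nat \<Rightarrow> real) \<Rightarrow> nat \<Rightarrow> (nat \<Rightarrow> real) \<Rightarrow> (nat \<Rightarrow> real) set" where
  "cellF n \<alpha> u c = fst ` maxface n c (liftA n \<alpha> u)"

definition cellG :: "nat \<Rightarrow> nat set set \<Rightarrow> (nat \<Rightarrow> real) \<Rightarrow> (nat \<Rightarrow> real) set" where
  "cellG n Bs c = fst ` maxface n c (liftP Bs)"

definition cellH :: "nat \<Rightarrow> (nat \<Rightarrow> real) \<Rightarrow> nat \<Rightarrow> (nat \<Rightarrow> real) \<Rightarrow> (nat \<Rightarrow> real) set" where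
  "cellH n \<beta> t c = fst ` maxface n c (liftC n \<beta> t)"

text \<open>F + G + H is a top-degree face: it is a maximal cell of the subdivision, canonically
  written F + G + H, with G a vertex of P(M).\<close>
definition top_degree_face :: "nat \<Rightarrow> nat set set \<Rightarrow> (nat \<Rightarrow> real) \<Rightarrow> (nat \<Rightarrow> real) \<Rightarrow> nat \<Rightarrow> nat
    \<Rightarrow> (nat \<Rightarrow> real) set \<Rightarrow> (nat \<Rightarrow> real) set \<Rightarrow> (nat \<Rightarrow> real) set \<Rightarrow> bool" where
  "top_degree_face n Bs \<alpha> \<beta> u t F G H \<longleftrightarrow>
     (\<exists>c. F = cellF n \<alpha> u c \<and> G = cellG n Bs c \<and> H = cellH n \<beta> t c \<and>
          (\<forall>c'. cell n Bs \<alpha> \<beta> u t c \<subseteq> cell n Bs \<alpha> \<beta> u t c' \<longrightarrow>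
                 cell n Bs \<alpha> \<beta> u t c' = cell n Bs \<alpha> \<beta> u t c) \<and>
          (\<exists>v \<in> matroid_polytope Bs. G = {v}))"

definition Tface :: "nat \<Rightarrow> nat \<Rightarrow> nat set \<Rightarrow> nat set \<Rightarrow> nat set \<Rightarrow> (nat \<Rightarrow> real) set" where
  "Tface u t X Y B = msum {indvec B} (msum (sdelta (real u) (insert 1 X)) (sdelta (- real t) (insert 1 Y)))"

definition is_T :: "nat \<Rightarrow> nat set set \<Rightarrow> (nat \<Rightarrow> real) \<Rightarrow> (nat \<Rightarrow> real) \<Rightarrow> nat \<Rightarrow> nat
    \<Rightarrow> nat set \<Rightarrow> nat set \<Rightarrow> nat set \<Rightarrow> bool" where
  "is_T n Bs \<alpha> \<beta> u t X Y B \<longleftrightarrow> B \<in> Bs \<and>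
     top_degree_face n Bs \<alpha> \<beta> u t (sdelta (real u) (insert 1 X)) {indvec B} (sdelta (- real t) (insert 1 Y))"

end

theory Submission
  imports Defs
begin

text \<open>A functional c selects a top-degree face exactly when its maximizers of u c_i - alpha_i and
  of -t c_i - beta_i are {1} \<union> X and {1} \<union> Y and B is the unique c-maximal basis.
  Such a c is determined up to a constant by (X, Y); in this normalisation the order of two
  elements depends only on the membership of one of them in X, which makes "e before f" stable
  under passing to any (X3, Y3) squeezed between (X1, Y1) and (X2, Y2). By the exchange property,
  B is the unique maximum iff it beats all neighbouring bases, so B is c3-optimal whenever it is
  c1- and c2-optimal. Finally, a common point p of T1 and T2 lifts to both lower faces; comparing
  the heights of the two lifts shows that they coincide, so B1 = B2 and p already lies in the
  smaller face T3.\<close>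

section \<open>Convex combinations\<close>

lemma ex_convex_weights_image_iff:
  assumes "inj_on f I"
  shows "(\<exists>w. (\<forall>v\<in>f ` I. 0 \<le> w v) \<and> (\<Sum>v\<in>f ` I. w v) = 1 \<and> P (\<lambda>h. \<Sum>v\<in>f ` I. w v * h v))
     \<longleftrightarrow> (\<exists>w. (\<forall>i\<in>I. 0 \<le> w i) \<and> sum w I = 1 \<and> P (\<lambda>h. \<Sum>i\<in>I. w i * h (f i)))"
proof
  assume "\<exists>w. (\<forall>v\<in>f ` I. 0 \<le> w v) \<and> (\<Sum>v\<in>f ` I. w v) = 1 \<and> P (\<lambda>h. \<Sum>v\<in>f ` I. w v * h v)"
  then obtain w where "\<forall>v\<in>f ` I. 0 \<le> w v" "(\<Sum>v\<in>f ` I. w v) = 1" "P (\<lambda>h. \<Sum>v\<in>f ` I. w v * h v)"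
    by blast
  then show "\<exists>w. (\<forall>i\<in>I. 0 \<le> w i) \<and> sum w I = 1 \<and> P (\<lambda>h. \<Sum>i\<in>I. w i * h (f i))"
    by (intro exI[of _ "w \<circ> f"]) (simp add: sum.reindex[OF assms])
next
  assume "\<exists>w. (\<forall>i\<in>I. 0 \<le> w i) \<and> sum w I = 1 \<and> P (\<lambda>h. \<Sum>i\<in>I. w i * h (f i))"
  then obtain w where "\<forall>i\<in>I. 0 \<le> w i" "sum w I = 1" "P (\<lambda>h. \<Sum>i\<in>I. w i * h (f i))"
    by blast
  then show "\<exists>w. (\<forall>v\<in>f ` I. 0 \<le> w v) \<and> (\<Sum>v\<in>f ` I. w v) = 1 \<and> P (\<lambda>h. \<Sum>v\<in>f ` I. w v * h v)"
    by (intro exI[of _ "w \<circ> the_inv_into I f"])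
      (simp add: sum.reindex[OF assms] the_inv_into_f_f[OF assms] cong: sum.cong)
qed

lemma cvx_image_inj:
  assumes "inj_on f I"
  shows "cvx (f ` I) = {(\<lambda>j. \<Sum>i\<in>I. w i * f i j) | w. (\<forall>i\<in>I. 0 \<le> w i) \<and> sum w I = 1}"
  using ex_convex_weights_image_iff[OF assms, where P = "\<lambda>E. _ = (\<lambda>j. E (\<lambda>v. v j))"]
  unfolding cvx_def by blast

lemma cvxL_image_inj:
  assumes "inj_on f I"
  shows "cvxL (f ` I) = {((\<lambda>j. \<Sum>i\<in>I. w i * fst (f i) j), \<Sum>i\<in>I. w i * snd (f i)) | w.
            (\<forall>i\<in>I. 0 \<le> w i) \<and> sum w I = 1}"
  using ex_convex_weights_image_iff[OF assms, where P = "\<lambda>E. _ = ((\<lambda>j. E (\<lambda>v. fst v j)), E snd)"]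
  unfolding cvxL_def by blast

lemma sum_indicator_mult:
  "finite V \<Longrightarrow> v \<in> V \<Longrightarrow> (\<Sum>x\<in>V. (if x = v then 1 else 0) * h x) = (h v :: real)"
  by (simp add: if_distrib[of "\<lambda>a. a * _"] cong: if_cong)

lemma cvx_vertex: "finite V \<Longrightarrow> v \<in> V \<Longrightarrow> v \<in> cvx V"
  unfolding cvx_def by (intro CollectI exI[of _ "\<lambda>x. if x = v then 1 else 0"]) (simp add: sum_indicator_mult)

lemma cvxL_vertex: "finite V \<Longrightarrow> v \<in> V \<Longrightarrow> v \<in> cvxL V"
  unfolding cvxL_def by (intro CollectI exI[of _ "\<lambda>x. if x = v then 1 else 0"]) (simp add: sum_indicator_mult)

lemma sum_weighted_gap:
  fixes w g :: "'a \<Rightarrow> real"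
  assumes "sum w I = 1"
  shows "(\<Sum>i\<in>I. w i * (M - g i)) = M - (\<Sum>i\<in>I. w i * g i)"
  using assms by (simp add: right_diff_distrib sum_subtractf flip: sum_distrib_right)

lemma convex_comb_le:
  fixes w g :: "'a \<Rightarrow> real"
  assumes "\<forall>i\<in>I. g i \<le> M" "\<forall>i\<in>I. 0 \<le> w i" "sum w I = 1"
  shows "(\<Sum>i\<in>I. w i * g i) \<le> M"
proof -
  have "0 \<le> (\<Sum>i\<in>I. w i * (M - g i))" using assms(1,2) by (simp add: sum_nonneg)
  then show ?thesis using sum_weighted_gap[OF assms(3)] by simp
qed

lemma convex_comb_eq_iff:
  fixes w g :: "'a \<Rightarrow> real"
  assumes "finite I" "\<forall>i\<in>I. g i \<le> M" "\<forall>i\<in>I. 0 \<le> w i" "sum w I = 1"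
  shows "(\<Sum>i\<in>I. w i * g i) = M \<longleftrightarrow> (\<forall>i\<in>I. w i \<noteq> 0 \<longrightarrow> g i = M)"
proof -
  have "(\<Sum>i\<in>I. w i * (M - g i)) = 0 \<longleftrightarrow> (\<forall>i\<in>I. w i * (M - g i) = 0)"
    using assms(2,3) by (intro sum_nonneg_eq_0_iff[OF assms(1)]) auto
  then show ?thesis using sum_weighted_gap[OF assms(4)] by auto
qed

section \<open>Probability vectors and maximizing sets\<close>

definition prob_vec :: "nat \<Rightarrow> nat set \<Rightarrow> (nat \<Rightarrow> real) \<Rightarrow> bool" where
  "prob_vec n S w \<longleftrightarrow>
     (\<forall>i\<in>{1..n}. 0 \<le> w i) \<and> (\<forall>i\<in>{1..n}. i \<notin> S \<longrightarrow> w i = 0) \<and> sum w {1..n} = 1"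

definition scaled_vec :: "nat \<Rightarrow> real \<Rightarrow> (nat \<Rightarrow> real) \<Rightarrow> nat \<Rightarrow> real" where
  "scaled_vec n s w = (\<lambda>j. if j \<in> {1..n} then s * w j else 0)"

definition dotp :: "nat \<Rightarrow> (nat \<Rightarrow> real) \<Rightarrow> (nat \<Rightarrow> real) \<Rightarrow> real" where
  "dotp n c x = (\<Sum>i\<in>{1..n}. c i * x i)"

lemma lfun_eq_dotp: "lfun n c z = dotp n c (fst z) - snd z"
  unfolding lfun_def dotp_def by simp

lemma prob_vec_full: "prob_vec n S w \<Longrightarrow> prob_vec n {1..n} w"
  unfolding prob_vec_def by auto

lemma prob_vec_mono: "prob_vec n S w \<Longrightarrow> S \<subseteq> T \<Longrightarrow> prob_vec n T w"
  unfolding prob_vec_def by auto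

lemma prob_vec_Int: "prob_vec n S w \<Longrightarrow> prob_vec n T w \<Longrightarrow> prob_vec n (S \<inter> T) w"
  unfolding prob_vec_def by auto

lemma prob_vec_iff_support:
  "prob_vec n {1..n} w \<Longrightarrow> prob_vec n S w \<longleftrightarrow> (\<forall>i\<in>{1..n}. w i \<noteq> 0 \<longrightarrow> i \<in> S)"
  unfolding prob_vec_def by auto

lemma dotp_scaled_vec: "dotp n c (scaled_vec n s w) = s * (\<Sum>i\<in>{1..n}. c i * w i)"
  unfolding dotp_def scaled_vec_def by (simp add: sum_distrib_left mult.left_commute)

lemma dotp_sev: "i \<in> {1..n} \<Longrightarrow> dotp n c (sev s i) = s * c i"
  unfolding dotp_def sev_def by (simp add: if_distrib cong: if_cong)

lemma dotp_indvec: "B \<subseteq> {1..n} \<Longrightarrow> dotp n c (indvec B) = sum c B"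
proof -
  assume "B \<subseteq> {1..n}"
  then have "{1..n} \<inter> B = B" by blast
  moreover have "dotp n c (indvec B) = (\<Sum>i\<in>{1..n}. if i \<in> B then c i else 0)"
    unfolding dotp_def indvec_def by (rule sum.cong) auto
  ultimately show ?thesis by (simp add: sum.inter_restrict[symmetric])
qed

lemma dotp_add3:
  "dotp n c (\<lambda>i. x i + (y i + z i)) = dotp n c x + dotp n c y + dotp n c z"
  unfolding dotp_def by (simp add: sum.distrib distrib_left)

lemma lfun_add3:
  "lfun n c ((\<lambda>i. x i + (y i + z i)), h1 + (h2 + h3)) = lfun n c (x, h1) + lfun n c (y, h2) + lfun n c (z, h3)"
  unfolding lfun_eq_dotp by (simp add: dotp_add3)

definition argmax_set :: "nat \<Rightarrow> (nat \<Rightarrow> real) \<Rightarrow> real \<Rightarrow> (nat \<Rightarrow> real) \<Rightarrow> nat set" where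
  "argmax_set n \<gamma> s c = {i\<in>{1..n}. \<forall>k\<in>{1..n}. s * c k - \<gamma> k \<le> s * c i - \<gamma> i}"

lemma argmax_set_subset: "argmax_set n \<gamma> s c \<subseteq> {1..n}"
  unfolding argmax_set_def by auto

lemma argmax_set_nonempty:
  assumes "1 \<le> n"
  obtains i where "i \<in> argmax_set n \<gamma> s c"
proof -
  let ?g = "\<lambda>i. s * c i - \<gamma> i"
  have "Max (?g ` {1..n}) \<in> ?g ` {1..n}" using assms by (intro Max_in) auto
  then obtain i where i: "i \<in> {1..n}" "?g i = Max (?g ` {1..n})" by auto
  have "?g k \<le> ?g i" if "k \<in> {1..n}" for k
    unfolding i(2) using that by (intro Max_ge) auto
  then show ?thesis using i(1) by (intro that) (auto simp: argmax_set_def)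
qed

lemma argmax_set_iff_eq:
  "i0 \<in> argmax_set n \<gamma> s c \<Longrightarrow> i \<in> {1..n} \<Longrightarrow>
     i \<in> argmax_set n \<gamma> s c \<longleftrightarrow> s * c i - \<gamma> i = s * c i0 - \<gamma> i0"
  unfolding argmax_set_def by (auto intro: order.antisym)

lemma argmax_set_eqI:
  assumes "S \<subseteq> {1..n}" "i0 \<in> S"
    and "\<And>i. i \<in> S \<Longrightarrow> s * c i - \<gamma> i = M"
    and "\<And>i. i \<in> {1..n} - S \<Longrightarrow> s * c i - \<gamma> i < M"
  shows "argmax_set n \<gamma> s c = S"
proof -
  have "s * c i - \<gamma> i \<le> M" if "i \<in> {1..n}" for i
    using assms(3,4) that by (cases "i \<in> S") (auto intro: less_imp_le)
  then show ?thesis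
    unfolding argmax_set_def using assms by (force simp: not_le)
qed

lemma prob_vec_value_le_argmax:
  assumes "prob_vec n {1..n} w" "i0 \<in> argmax_set n \<gamma> s c"
  shows "(\<Sum>i\<in>{1..n}. w i * (s * c i - \<gamma> i)) \<le> s * c i0 - \<gamma> i0"
  using assms by (intro convex_comb_le) (auto simp: prob_vec_def argmax_set_def)

lemma prob_vec_value_eq_argmax_iff:
  assumes "prob_vec n {1..n} w" "i0 \<in> argmax_set n \<gamma> s c"
  shows "(\<Sum>i\<in>{1..n}. w i * (s * c i - \<gamma> i)) = s * c i0 - \<gamma> i0 \<longleftrightarrow> prob_vec n (argmax_set n \<gamma> s c) w"
proof -
  have "(\<Sum>i\<in>{1..n}. w i * (s * c i - \<gamma> i)) = s * c i0 - \<gamma> i0 \<longleftrightarrow>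
      (\<forall>i\<in>{1..n}. w i \<noteq> 0 \<longrightarrow> s * c i - \<gamma> i = s * c i0 - \<gamma> i0)"
    using assms by (intro convex_comb_eq_iff) (auto simp: prob_vec_def argmax_set_def)
  then show ?thesis
    using argmax_set_iff_eq[OF assms(2)] prob_vec_iff_support[OF assms(1)] by auto
qed

section \<open>Simplices and their lifts\<close>

lemma inj_on_sev: "s \<noteq> 0 \<Longrightarrow> inj_on (sev s) I"
  unfolding inj_on_def sev_def by (metis (mono_tags, lifting))

lemma sum_mult_sev:
  "finite I \<Longrightarrow> (\<Sum>i\<in>I. w i * sev s i j) = (if j \<in> I then s * w j else 0)"
  unfolding sev_def by (simp add: if_distrib[of "\<lambda>a. _ * a"] cong: if_cong)

lemma sdelta_eq:
  assumes "s \<noteq> 0" "S \<subseteq> {1..n}"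
  shows "sdelta s S = {scaled_vec n s w | w. prob_vec n S w}"
proof -
  have fin: "finite S" using assms(2) finite_subset by blast
  have sum_S: "sum w S = sum w {1..n}" if "\<forall>i\<in>{1..n}. i \<notin> S \<longrightarrow> w i = 0" for w
    using assms(2) that by (intro sum.mono_neutral_left) auto
  have "sdelta s S = {(\<lambda>j. if j \<in> S then s * w j else 0) | w. (\<forall>i\<in>S. 0 \<le> w i) \<and> sum w S = 1}"
    unfolding sdelta_def cvx_image_inj[OF inj_on_sev[OF assms(1)]] by (simp add: sum_mult_sev[OF fin])
  also have "\<dots> = {scaled_vec n s w | w. prob_vec n S w}"
  proof (intro set_eqI iffI)
    fix x assume "x \<in> {(\<lambda>j. if j \<in> S then s * w j else 0) | w. (\<forall>i\<in>S. 0 \<le> w i) \<and> sum w S = 1}"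
    then obtain w where w: "\<forall>i\<in>S. 0 \<le> w i" "sum w S = 1" "x = (\<lambda>j. if j \<in> S then s * w j else 0)"
      by blast
    let ?w = "\<lambda>i. if i \<in> S then w i else 0"
    have "sum ?w S = sum w S" by (rule sum.cong) auto
    then have "prob_vec n S ?w" using w(1,2) sum_S[of ?w] unfolding prob_vec_def by auto
    moreover have "x = scaled_vec n s ?w" using w(3) assms(2) unfolding scaled_vec_def by (intro ext) auto
    ultimately show "x \<in> {scaled_vec n s w | w. prob_vec n S w}" by blast
  next
    fix x assume "x \<in> {scaled_vec n s w | w. prob_vec n S w}"
    then obtain w where w: "prob_vec n S w" "x = scaled_vec n s w" by blast
    then have "(\<forall>i\<in>S. 0 \<le> w i) \<and> sum w S = 1" using assms(2) sum_S unfolding prob_vec_def by auto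
    moreover have "x = (\<lambda>j. if j \<in> S then s * w j else 0)"
      using w assms(2) unfolding prob_vec_def scaled_vec_def by (intro ext) auto
    ultimately show "x \<in> {(\<lambda>j. if j \<in> S then s * w j else 0) | w. (\<forall>i\<in>S. 0 \<le> w i) \<and> sum w S = 1}"
      by blast
  qed
  finally show ?thesis .
qed

lemma sev_in_sdelta_iff:
  assumes "s \<noteq> 0" "S \<subseteq> {1..n}" "i \<in> {1..n}"
  shows "sev s i \<in> sdelta s S \<longleftrightarrow> i \<in> S"
proof
  assume "sev s i \<in> sdelta s S"
  then obtain w where w: "prob_vec n S w" "sev s i = scaled_vec n s w"
    using sdelta_eq[OF assms(1,2)] by blast
  then have "sev s i i = scaled_vec n s w i" by simp
  then have "s = s * w i" using assms(3) unfolding sev_def scaled_vec_def by simp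
  then have "w i \<noteq> 0" using assms(1) by auto
  then show "i \<in> S" using w(1) assms(3) unfolding prob_vec_def by auto
next
  assume "i \<in> S"
  then show "sev s i \<in> sdelta s S"
    unfolding sdelta_def using assms(2) finite_subset by (intro cvx_vertex) auto
qed

lemma sdelta_inj:
  assumes "s \<noteq> 0" "S \<subseteq> {1..n}" "S' \<subseteq> {1..n}" "sdelta s S = sdelta s S'"
  shows "S = S'"
  using sev_in_sdelta_iff[OF assms(1,2)] sev_in_sdelta_iff[OF assms(1,3)] assms(2-4) by blast

definition simplex_lift :: "nat \<Rightarrow> real \<Rightarrow> (nat \<Rightarrow> real) \<Rightarrow> ((nat \<Rightarrow> real) \<times> real) set" where
  "simplex_lift n s \<gamma> = cvxL ((\<lambda>i. (sev s i, \<gamma> i)) ` {1..n})"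

lemma liftA_eq: "liftA n \<alpha> u = simplex_lift n (real u) \<alpha>"
  unfolding liftA_def simplex_lift_def ..

lemma liftC_eq: "liftC n \<beta> t = simplex_lift n (- real t) \<beta>"
  unfolding liftC_def simplex_lift_def ..

lemma simplex_lift_eq:
  assumes "s \<noteq> 0"
  shows "simplex_lift n s \<gamma> = {(scaled_vec n s w, \<Sum>i\<in>{1..n}. w i * \<gamma> i) | w. prob_vec n {1..n} w}"
proof -
  have inj: "inj_on (\<lambda>i. (sev s i, \<gamma> i)) {1..n}"
    using inj_on_sev[OF assms] by (auto simp: inj_on_def)
  show ?thesis
    unfolding simplex_lift_def cvxL_image_inj[OF inj] by (simp add: sum_mult_sev scaled_vec_def prob_vec_def)
qed

lemma simplex_lift_vertex: "i \<in> {1..n} \<Longrightarrow> (sev s i, \<gamma> i) \<in> simplex_lift n s \<gamma>"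
  unfolding simplex_lift_def by (intro cvxL_vertex) auto

lemma lfun_sev: "i \<in> {1..n} \<Longrightarrow> lfun n c (sev s i, \<gamma> i) = s * c i - \<gamma> i"
  by (simp add: lfun_eq_dotp dotp_sev)

lemma lfun_scaled_vec:
  "lfun n c (scaled_vec n s w, \<Sum>i\<in>{1..n}. w i * \<gamma> i) = (\<Sum>i\<in>{1..n}. w i * (s * c i - \<gamma> i))"
  by (simp add: lfun_eq_dotp dotp_scaled_vec sum_distrib_left right_diff_distrib sum_subtractf
      mult.left_commute mult.commute)

lemma lfun_simplex_lift_le:
  assumes "s \<noteq> 0" "a \<in> simplex_lift n s \<gamma>" "i0 \<in> argmax_set n \<gamma> s c"
  shows "lfun n c a \<le> s * c i0 - \<gamma> i0"
proof -
  obtain w where "prob_vec n {1..n} w" "a = (scaled_vec n s w, \<Sum>i\<in>{1..n}. w i * \<gamma> i)"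
    using assms(2) simplex_lift_eq[OF assms(1)] by blast
  then show ?thesis using prob_vec_value_le_argmax[OF _ assms(3)] lfun_scaled_vec by metis
qed

lemma coordinate_sum_simplex_lift:
  assumes "s \<noteq> 0" "a \<in> simplex_lift n s \<gamma>"
  shows "dotp n (\<lambda>_. 1) (fst a) = s"
proof -
  obtain w where "prob_vec n {1..n} w" "a = (scaled_vec n s w, \<Sum>i\<in>{1..n}. w i * \<gamma> i)"
    using assms(2) simplex_lift_eq[OF assms(1)] by blast
  then show ?thesis by (simp add: dotp_scaled_vec prob_vec_def)
qed

lemma maxface_simplex_lift:
  assumes "1 \<le> n" "s \<noteq> 0"
  shows "fst ` maxface n c (simplex_lift n s \<gamma>) = sdelta s (argmax_set n \<gamma> s c)"
proof -
  let ?L = "simplex_lift n s \<gamma>" and ?S = "argmax_set n \<gamma> s c"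
  obtain i0 where i0: "i0 \<in> ?S" using argmax_set_nonempty[OF assms(1)] .
  then have i0n: "i0 \<in> {1..n}" using argmax_set_subset by blast
  let ?M = "s * c i0 - \<gamma> i0"
  have "maxface n c ?L = {z \<in> ?L. lfun n c z = ?M}"
  proof (intro set_eqI iffI)
    fix z assume "z \<in> maxface n c ?L"
    then have "z \<in> ?L" "lfun n c (sev s i0, \<gamma> i0) \<le> lfun n c z"
      using simplex_lift_vertex[OF i0n] unfolding maxface_def by auto
    then show "z \<in> {z \<in> ?L. lfun n c z = ?M}"
      using lfun_simplex_lift_le[OF assms(2) _ i0] lfun_sev[OF i0n] by fastforce
  next
    fix z assume "z \<in> {z \<in> ?L. lfun n c z = ?M}"
    then show "z \<in> maxface n c ?L"
      using lfun_simplex_lift_le[OF assms(2) _ i0] unfolding maxface_def by auto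
  qed
  also have "\<dots> = (\<lambda>w. (scaled_vec n s w, \<Sum>i\<in>{1..n}. w i * \<gamma> i)) ` {w. prob_vec n ?S w}"
  proof (intro set_eqI iffI)
    fix z assume z: "z \<in> {z \<in> ?L. lfun n c z = ?M}"
    then obtain w where w: "prob_vec n {1..n} w" "z = (scaled_vec n s w, \<Sum>i\<in>{1..n}. w i * \<gamma> i)"
      using simplex_lift_eq[OF assms(2)] by blast
    then have "prob_vec n ?S w"
      using z prob_vec_value_eq_argmax_iff[OF w(1) i0] lfun_scaled_vec by auto
    then show "z \<in> (\<lambda>w. (scaled_vec n s w, \<Sum>i\<in>{1..n}. w i * \<gamma> i)) ` {w. prob_vec n ?S w}"
      using w(2) by blast
  next
    fix z assume "z \<in> (\<lambda>w. (scaled_vec n s w, \<Sum>i\<in>{1..n}. w i * \<gamma> i)) ` {w. prob_vec n ?S w}"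
    then obtain w where w: "prob_vec n ?S w" "z = (scaled_vec n s w, \<Sum>i\<in>{1..n}. w i * \<gamma> i)"
      by blast
    have "z \<in> ?L" using w prob_vec_full simplex_lift_eq[OF assms(2)] by blast
    moreover have "lfun n c z = ?M"
      using w prob_vec_value_eq_argmax_iff[OF prob_vec_full[OF w(1)] i0] lfun_scaled_vec by auto
    ultimately show "z \<in> {z \<in> ?L. lfun n c z = ?M}" by blast
  qed
  finally show ?thesis
    unfolding sdelta_eq[OF assms(2) argmax_set_subset] by (auto simp: image_image)
qed

section \<open>Matroids and the matroid polytope\<close>

lemma bases_subset:
  assumes "matroid_bases n Bs" "B \<in> Bs"
  shows "B \<subseteq> {1..n}"
  using assms(1) unfolding matroid_bases_def by (elim conjE) (use assms(2) in blast)

lemma finite_basis: "matroid_bases n Bs \<Longrightarrow> B \<in> Bs \<Longrightarrow> finite B"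
  by (rule finite_subset[OF bases_subset finite_atLeastAtMost])

lemma finite_bases: "matroid_bases n Bs \<Longrightarrow> finite Bs"
  using bases_subset by (intro finite_subset[of Bs "Pow {1..n}"]) auto

lemma basis_exchange:
  assumes "matroid_bases n Bs" "B1 \<in> Bs" "B2 \<in> Bs" "x \<in> B1 - B2"
  shows "\<exists>y\<in>B2 - B1. insert y (B1 - {x}) \<in> Bs"
proof -
  have "\<forall>B1\<in>Bs. \<forall>B2\<in>Bs. \<forall>x\<in>B1 - B2. \<exists>y\<in>B2 - B1. insert y (B1 - {x}) \<in> Bs"
    using assms(1) unfolding matroid_bases_def by (elim conjE)
  then show ?thesis using assms(2-4) by blast
qed

lemma bases_subset_eq:
  assumes "matroid_bases n Bs" "B1 \<in> Bs" "B2 \<in> Bs" "B1 \<subseteq> B2"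
  shows "B1 = B2"
proof (rule ccontr)
  assume "B1 \<noteq> B2"
  then obtain x where "x \<in> B2 - B1" using assms(4) by blast
  then show False using basis_exchange[OF assms(1,3,2)] assms(4) by blast
qed

lemma bases_card_eq:
  assumes mb: "matroid_bases n Bs" and "B1 \<in> Bs" "B2 \<in> Bs"
  shows "card B1 = card B2"
  using assms(2)
proof (induction "card (B1 - B2)" arbitrary: B1 rule: less_induct)
  case less
  show ?case
  proof (cases "B1 \<subseteq> B2")
    case True then show ?thesis using bases_subset_eq[OF mb less.prems assms(3)] by simp
  next
    case False
    then obtain x where x: "x \<in> B1 - B2" by blast
    then obtain y where y: "y \<in> B2 - B1" "insert y (B1 - {x}) \<in> Bs"
      using basis_exchange[OF mb less.prems assms(3)] by blast
    have fin: "finite B1" using finite_basis[OF mb less.prems] .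
    then have pos: "card B1 > 0" using x by (auto simp: card_gt_0_iff)
    have "card ((B1 - B2) - {x}) < card (B1 - B2)" by (rule card_Diff1_less) (use fin x in auto)
    moreover have "insert y (B1 - {x}) - B2 = (B1 - B2) - {x}" using y by auto
    ultimately have "card (insert y (B1 - {x}) - B2) < card (B1 - B2)" by simp
    then have "card (insert y (B1 - {x})) = card B2" using less.hyps y(2) by blast
    moreover have "card (insert y (B1 - {x})) = card B1"
      using fin pos x y by (simp add: card_Diff_singleton)
    ultimately show ?thesis by simp
  qed
qed

definition unique_max_basis :: "nat set set \<Rightarrow> (nat \<Rightarrow> real) \<Rightarrow> nat set \<Rightarrow> bool" where
  "unique_max_basis Bs c B \<longleftrightarrow> B \<in> Bs \<and> (\<forall>B'\<in>Bs. B' \<noteq> B \<longrightarrow> sum c B' < sum c B)"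

lemma unique_max_basis_le: "unique_max_basis Bs c B \<Longrightarrow> B' \<in> Bs \<Longrightarrow> sum c B' \<le> sum c B"
  unfolding unique_max_basis_def by (cases "B' = B") auto

lemma unique_max_basis_shift:
  assumes mb: "matroid_bases n Bs" and shift: "\<forall>i\<in>{1..n}. c' i = c i + d"
    and "unique_max_basis Bs c B"
  shows "unique_max_basis Bs c' B"
proof -
  have "sum c' B' = sum c B' + d * card B" if "B' \<in> Bs" for B'
  proof -
    have "sum c' B' = (\<Sum>i\<in>B'. c i + d)"
      using shift bases_subset[OF mb that] by (intro sum.cong) auto
    then show ?thesis
      using bases_card_eq[OF mb that, of B] assms(3) by (simp add: sum.distrib unique_max_basis_def)
  qed
  then show ?thesis using assms(3) unfolding unique_max_basis_def by auto
qed

lemma unique_max_basis_exchange_less: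
  assumes mb: "matroid_bases n Bs" and "unique_max_basis Bs c B"
    and "f \<in> B" "e \<notin> B" "insert e (B - {f}) \<in> Bs"
  shows "c e < c f"
proof -
  have "sum c (insert e (B - {f})) = c e + (sum c B - c f)"
    using assms(3,4) finite_basis[OF mb] assms(2) by (simp add: sum_diff1 unique_max_basis_def)
  moreover have "sum c (insert e (B - {f})) < sum c B"
    using assms(2-5) unfolding unique_max_basis_def by auto
  ultimately show ?thesis by simp
qed

lemma unique_max_basis_if_exchange_less:
  assumes mb: "matroid_bases n Bs" and B: "B \<in> Bs"
    and exch: "\<And>f e. f \<in> B \<Longrightarrow> e \<notin> B \<Longrightarrow> insert e (B - {f}) \<in> Bs \<Longrightarrow> c e < c f"
  shows "unique_max_basis Bs c B"
  unfolding unique_max_basis_def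
proof (intro conjI B ballI impI)
  fix B' assume "B' \<in> Bs" "B' \<noteq> B"
  then show "sum c B' < sum c B"
  proof (induction "card (B' - B)" arbitrary: B' rule: less_induct)
    case less
    have fin: "finite B'" using finite_basis[OF mb less.prems(1)] .
    have "B' - B \<noteq> {}" using bases_subset_eq[OF mb less.prems(1) B] less.prems(2) by blast
    then have "Min (c ` (B' - B)) \<in> c ` (B' - B)" using fin by (intro Min_in) auto
    then obtain x where x: "x \<in> B' - B" "c x = Min (c ` (B' - B))" by auto
    then have x_min: "\<forall>e\<in>B' - B. c x \<le> c e" using fin by simp
    obtain y where y: "y \<in> B - B'" "insert y (B' - {x}) \<in> Bs"
      using basis_exchange[OF mb less.prems(1) B x(1)] by blast
    have sum_y: "sum c (insert y (B' - {x})) = sum c B' - c x + c y"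
      using fin x y by (simp add: sum_diff1)
    show ?case
    proof (cases "insert y (B' - {x}) = B")
      case True
      then have "B' = insert x (B - {y})" using x y by blast
      then have "c x < c y" using exch[of y x] x y less.prems(1) by blast
      then show ?thesis using sum_y True by simp
    next
      case False
      have "card ((B' - B) - {x}) < card (B' - B)" by (rule card_Diff1_less) (use fin x in auto)
      moreover have "insert y (B' - {x}) - B = (B' - B) - {x}" using y by auto
      ultimately have "card (insert y (B' - {x}) - B) < card (B' - B)" by simp
      then have "sum c (insert y (B' - {x})) < sum c B" using less.hyps y(2) False by blast
      moreover obtain e where e: "e \<in> B' - B" "insert e (B - {y}) \<in> Bs"
        using basis_exchange[OF mb B less.prems(1)] y(1) by blast
      then have "c e < c y" using exch[of y e] y by blast
      ultimately show ?thesis using sum_y x_min e(1) by force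
    qed
  qed
qed

lemma unique_max_basis_iff_exchange:
  assumes "matroid_bases n Bs" "B \<in> Bs"
  shows "unique_max_basis Bs c B \<longleftrightarrow>
     (\<forall>f\<in>B. \<forall>e. e \<notin> B \<longrightarrow> insert e (B - {f}) \<in> Bs \<longrightarrow> c e < c f)"
  using unique_max_basis_exchange_less[OF assms(1)] unique_max_basis_if_exchange_less[OF assms]
  by blast

lemma inj_on_indvec: "inj_on indvec A"
  unfolding inj_on_def indvec_def by (metis (mono_tags) one_neq_zero subsetI subset_antisym)

lemma matroid_polytope_eq:
  "matroid_bases n Bs \<Longrightarrow>
     matroid_polytope Bs = {(\<lambda>j. \<Sum>B\<in>Bs. w B * indvec B j) | w. (\<forall>B\<in>Bs. 0 \<le> w B) \<and> sum w Bs = 1}"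
  unfolding matroid_polytope_def by (rule cvx_image_inj[OF inj_on_indvec])

lemma indvec_in_matroid_polytope: "matroid_bases n Bs \<Longrightarrow> B \<in> Bs \<Longrightarrow> indvec B \<in> matroid_polytope Bs"
  unfolding matroid_polytope_def by (intro cvx_vertex) (auto simp: finite_bases)

lemma indvec_liftP: "matroid_bases n Bs \<Longrightarrow> B \<in> Bs \<Longrightarrow> (indvec B, 0) \<in> liftP Bs"
  unfolding liftP_def by (intro imageI indvec_in_matroid_polytope)

lemma liftP_elim:
  assumes "matroid_bases n Bs" "z \<in> liftP Bs"
  obtains w where "\<forall>B\<in>Bs. 0 \<le> w B" "sum w Bs = 1" "z = ((\<lambda>j. \<Sum>B\<in>Bs. w B * indvec B j), 0)"
  using assms unfolding liftP_def matroid_polytope_eq[OF assms(1)] by blast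

lemma lfun_convex_comb_indvec:
  assumes mb: "matroid_bases n Bs"
  shows "lfun n c ((\<lambda>j. \<Sum>B\<in>Bs. w B * indvec B j), 0) = (\<Sum>B\<in>Bs. w B * sum c B)"
proof -
  have "lfun n c ((\<lambda>j. \<Sum>B\<in>Bs. w B * indvec B j), 0) = (\<Sum>i\<in>{1..n}. \<Sum>B\<in>Bs. w B * (c i * indvec B i))"
    unfolding lfun_eq_dotp dotp_def by (simp add: sum_distrib_left mult.left_commute)
  also have "\<dots> = (\<Sum>B\<in>Bs. w B * dotp n c (indvec B))"
    unfolding dotp_def by (subst sum.swap) (simp add: sum_distrib_left)
  also have "\<dots> = (\<Sum>B\<in>Bs. w B * sum c B)"
    using dotp_indvec[OF bases_subset[OF mb]] by simp
  finally show ?thesis .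
qed

lemma lfun_liftP_le:
  assumes mb: "matroid_bases n Bs" and "z \<in> liftP Bs" "\<forall>B'\<in>Bs. sum c B' \<le> sum c B"
  shows "lfun n c z \<le> sum c B"
proof -
  obtain w where "\<forall>B\<in>Bs. 0 \<le> w B" "sum w Bs = 1" "z = ((\<lambda>j. \<Sum>B\<in>Bs. w B * indvec B j), 0)"
    using liftP_elim[OF assms(1,2)] .
  then show ?thesis
    using convex_comb_le[of Bs "sum c"] assms(3) by (simp add: lfun_convex_comb_indvec[OF mb])
qed

lemma coordinate_sum_liftP:
  assumes mb: "matroid_bases n Bs" and "B \<in> Bs" "z \<in> liftP Bs"
  shows "dotp n (\<lambda>_. 1) (fst z) = card B"
proof -
  obtain w where w: "sum w Bs = 1" "z = ((\<lambda>j. \<Sum>B\<in>Bs. w B * indvec B j), 0)"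
    using liftP_elim[OF assms(1,3)] by metis
  have "(\<Sum>B'\<in>Bs. w B' * card B') = (\<Sum>B'\<in>Bs. w B' * card B)"
    using bases_card_eq[OF mb _ assms(2)] by simp
  then show ?thesis
    using w lfun_convex_comb_indvec[OF mb, of "\<lambda>_. 1"] by (simp add: lfun_eq_dotp flip: sum_distrib_right)
qed

lemma liftP_snd: "z \<in> liftP Bs \<Longrightarrow> snd z = 0"
  unfolding liftP_def by auto

lemma cellG_eq_singleton_iff:
  assumes mb: "matroid_bases n Bs" and B: "B \<in> Bs"
  shows "cellG n Bs c = {indvec B} \<longleftrightarrow> unique_max_basis Bs c B"
proof
  have lfun_vertex: "lfun n c (indvec B', 0) = sum c B'" if "B' \<in> Bs" for B'
    using dotp_indvec[OF bases_subset[OF mb that]] by (simp add: lfun_eq_dotp)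
  assume G: "cellG n Bs c = {indvec B}"
  then obtain z where z: "z \<in> maxface n c (liftP Bs)" "fst z = indvec B"
    unfolding cellG_def by (metis imageE insertI1)
  moreover have "snd z = 0" using z(1) liftP_snd unfolding maxface_def by blast
  ultimately have "z = (indvec B, 0)" by (simp add: prod_eq_iff)
  then have max: "\<forall>z'\<in>liftP Bs. lfun n c z' \<le> sum c B"
    using z(1) lfun_vertex[OF B] unfolding maxface_def by auto
  have "sum c B' < sum c B" if "B' \<in> Bs" "B' \<noteq> B" for B'
  proof (rule ccontr)
    assume "\<not> sum c B' < sum c B"
    then have "(indvec B', 0) \<in> maxface n c (liftP Bs)"
      using max indvec_liftP[OF mb that(1)] lfun_vertex[OF that(1)] unfolding maxface_def by force
    then have "indvec B' \<in> cellG n Bs c" unfolding cellG_def by force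
    then have "indvec B' = indvec B" using G by blast
    then show False using inj_on_indvec[of UNIV] that(2) by (auto dest: injD)
  qed
  then show "unique_max_basis Bs c B" using B unfolding unique_max_basis_def by blast
next
  have lfun_vertex: "lfun n c (indvec B', 0) = sum c B'" if "B' \<in> Bs" for B'
    using dotp_indvec[OF bases_subset[OF mb that]] by (simp add: lfun_eq_dotp)
  assume U: "unique_max_basis Bs c B"
  have le: "\<forall>B'\<in>Bs. sum c B' \<le> sum c B" using unique_max_basis_le[OF U] by blast
  have vertex_max: "(indvec B, 0) \<in> maxface n c (liftP Bs)"
    using indvec_liftP[OF mb B] lfun_liftP_le[OF mb _ le] lfun_vertex[OF B] unfolding maxface_def by simp
  have "z = (indvec B, 0)" if z: "z \<in> maxface n c (liftP Bs)" for z
  proof -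
    obtain w where w: "\<forall>B\<in>Bs. 0 \<le> w B" "sum w Bs = 1" "z = ((\<lambda>j. \<Sum>B\<in>Bs. w B * indvec B j), 0)"
      using z liftP_elim[OF mb] unfolding maxface_def by blast
    have w4: "lfun n c z = (\<Sum>B\<in>Bs. w B * sum c B)" using lfun_convex_comb_indvec[OF mb] w(3) by simp
    have "lfun n c z \<le> sum c B" using z lfun_liftP_le[OF mb _ le] unfolding maxface_def by blast
    moreover have "sum c B \<le> lfun n c z"
      using z indvec_liftP[OF mb B] lfun_vertex[OF B] unfolding maxface_def by force
    ultimately have "lfun n c z = sum c B" by simp
    then have "\<forall>B'\<in>Bs. w B' \<noteq> 0 \<longrightarrow> sum c B' = sum c B"
      using convex_comb_eq_iff[OF finite_bases[OF mb] le w(1,2)] w4 by simp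
    then have w0: "\<forall>B'\<in>Bs. B' \<noteq> B \<longrightarrow> w B' = 0"
      using U unfolding unique_max_basis_def by force
    have "sum w Bs = sum w {B}"
      by (rule sum.mono_neutral_right) (use finite_bases[OF mb] B w0 in auto)
    moreover have "(\<Sum>B'\<in>Bs. w B' * indvec B' j) = (\<Sum>B'\<in>{B}. w B' * indvec B' j)" for j
      by (rule sum.mono_neutral_right) (use finite_bases[OF mb] B w0 in auto)
    ultimately show ?thesis using w(2,3) by simp
  qed
  then have "maxface n c (liftP Bs) = {(indvec B, 0)}" using vertex_max by blast
  then show "cellG n Bs c = {indvec B}" unfolding cellG_def by simp
qed

section \<open>Cells of the mixed subdivision\<close>

lemma maxface_lfun_eq: "z \<in> maxface n c S \<Longrightarrow> z' \<in> maxface n c S \<Longrightarrow> lfun n c z = lfun n c z'"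
  unfolding maxface_def by (auto intro: order.antisym)

text \<open>Both points are the lowest point of S over their common projection, hence equal.\<close>

lemma maxface_of_same_projection:
  assumes "z \<in> maxface n c S" "z' \<in> maxface n c' S" "fst z = fst z'"
  shows "z \<in> maxface n c' S"
proof -
  have "lfun n c z' \<le> lfun n c z" "lfun n c' z \<le> lfun n c' z'"
    using assms(1,2) unfolding maxface_def by auto
  then have "z = z'" using assms(3) by (simp add: lfun_eq_dotp prod_eq_iff)
  then show ?thesis using assms(2) by simp
qed

locale mixed_subdivision =
  fixes n :: nat and Bs :: "nat set set" and \<alpha> \<beta> :: "nat \<Rightarrow> real" and u t :: nat
  assumes n_pos: "1 \<le> n" and matroid: "matroid_bases n Bs" and u_pos: "0 < u" and t_pos: "0 < t"
begin

lemma insert_one_subset: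
  assumes "X \<union> Y = {2..n}"
  shows "insert 1 X \<subseteq> {1..n}" "insert 1 Y \<subseteq> {1..n}"
proof -
  have "X \<subseteq> {2..n}" "Y \<subseteq> {2..n}" using assms by blast+
  then show "insert 1 X \<subseteq> {1..n}" "insert 1 Y \<subseteq> {1..n}" using n_pos by auto
qed

lemma cellF_eq: "cellF n \<alpha> u c = sdelta (real u) (argmax_set n \<alpha> (real u) c)"
  unfolding cellF_def liftA_eq using maxface_simplex_lift n_pos u_pos by simp

lemma cellH_eq: "cellH n \<beta> t c = sdelta (- real t) (argmax_set n \<beta> (- real t) c)"
  unfolding cellH_def liftC_eq using maxface_simplex_lift n_pos t_pos by simp

lemma Lift_elim:
  assumes "z \<in> Lift n Bs \<alpha> \<beta> u t"
  obtains a g h where "a \<in> simplex_lift n (real u) \<alpha>" "g \<in> liftP Bs" "h \<in> simplex_lift n (- real t) \<beta>"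
    "z = ((\<lambda>i. fst a i + (fst g i + fst h i)), snd a + (snd g + snd h))"
  using assms unfolding Lift_def msumL_def liftA_eq liftC_eq by auto

lemma Lift_intro:
  assumes "a \<in> simplex_lift n (real u) \<alpha>" "g \<in> liftP Bs" "h \<in> simplex_lift n (- real t) \<beta>"
  shows "((\<lambda>i. fst a i + (fst g i + fst h i)), snd a + (snd g + snd h)) \<in> Lift n Bs \<alpha> \<beta> u t"
  using assms unfolding Lift_def msumL_def liftA_eq liftC_eq by fastforce

lemma coordinate_sum_Lift:
  assumes "B \<in> Bs" "z \<in> Lift n Bs \<alpha> \<beta> u t"
  shows "dotp n (\<lambda>_. 1) (fst z) = real u + real (card B) - real t"
proof -
  obtain a g h where agh: "a \<in> simplex_lift n (real u) \<alpha>" "g \<in> liftP Bs" "h \<in> simplex_lift n (- real t) \<beta>"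
    "z = ((\<lambda>i. fst a i + (fst g i + fst h i)), snd a + (snd g + snd h))"
    using Lift_elim[OF assms(2)] .
  then show ?thesis
    using coordinate_sum_simplex_lift[OF _ agh(1)] coordinate_sum_simplex_lift[OF _ agh(3)]
      coordinate_sum_liftP[OF matroid assms(1) agh(2)] u_pos t_pos
    by (simp add: dotp_add3)
qed

text \<open>The coordinate sum is constant on the lift.\<close>

lemma maxface_Lift_shift:
  assumes "\<forall>i\<in>{1..n}. c' i = c i + d"
  shows "maxface n c' (Lift n Bs \<alpha> \<beta> u t) = maxface n c (Lift n Bs \<alpha> \<beta> u t)"
proof -
  have "Bs \<noteq> {}" using matroid unfolding matroid_bases_def by (elim conjE)
  then obtain B where B: "B \<in> Bs" by blast
  have "lfun n c' z = lfun n c z + d * (real u + real (card B) - real t)"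
    if "z \<in> Lift n Bs \<alpha> \<beta> u t" for z
  proof -
    have "(\<Sum>i\<in>{1..n}. c' i * fst z i) = (\<Sum>i\<in>{1..n}. c i * fst z i + d * fst z i)"
      using assms by (intro sum.cong) (auto simp: distrib_right)
    then have "lfun n c' z = lfun n c z + d * dotp n (\<lambda>_. 1) (fst z)"
      unfolding lfun_eq_dotp dotp_def by (simp add: sum.distrib sum_distrib_left)
    then show ?thesis using coordinate_sum_Lift[OF B that] by simp
  qed
  then show ?thesis unfolding maxface_def by auto
qed

definition vertex_point :: "nat set \<Rightarrow> nat \<Rightarrow> nat \<Rightarrow> (nat \<Rightarrow> real) \<times> real" where
  "vertex_point B i j =
     ((\<lambda>k. sev (real u) i k + (indvec B k + sev (- real t) j k)), \<alpha> i + (0 + \<beta> j))"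

lemma vertex_point_in_Lift:
  "B \<in> Bs \<Longrightarrow> i \<in> {1..n} \<Longrightarrow> j \<in> {1..n} \<Longrightarrow> vertex_point B i j \<in> Lift n Bs \<alpha> \<beta> u t"
  using Lift_intro[OF simplex_lift_vertex indvec_liftP[OF matroid] simplex_lift_vertex]
  unfolding vertex_point_def by simp

lemma lfun_vertex_point:
  "B \<in> Bs \<Longrightarrow> i \<in> {1..n} \<Longrightarrow> j \<in> {1..n} \<Longrightarrow>
     lfun n c (vertex_point B i j) = (real u * c i - \<alpha> i) + sum c B + (- real t * c j - \<beta> j)"
  unfolding vertex_point_def lfun_add3
  by (simp add: lfun_eq_dotp dotp_sev dotp_indvec[OF bases_subset[OF matroid]])

lemma vertex_point_maxface:
  assumes "\<forall>B'\<in>Bs. sum c B' \<le> sum c B" "B \<in> Bs"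
    and "i \<in> argmax_set n \<alpha> (real u) c" "j \<in> argmax_set n \<beta> (- real t) c"
  shows "vertex_point B i j \<in> maxface n c (Lift n Bs \<alpha> \<beta> u t)"
proof -
  have ij: "i \<in> {1..n}" "j \<in> {1..n}" using assms(3,4) argmax_set_subset by blast+
  have "lfun n c z \<le> lfun n c (vertex_point B i j)" if z: "z \<in> Lift n Bs \<alpha> \<beta> u t" for z
  proof -
    obtain a g h where agh: "a \<in> simplex_lift n (real u) \<alpha>" "g \<in> liftP Bs"
      "h \<in> simplex_lift n (- real t) \<beta>"
      "z = ((\<lambda>i. fst a i + (fst g i + fst h i)), snd a + (snd g + snd h))"
      using Lift_elim[OF z] .
    then show ?thesis
      using lfun_simplex_lift_le[OF _ agh(1) assms(3)] lfun_simplex_lift_le[OF _ agh(3) assms(4)]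
        lfun_liftP_le[OF matroid agh(2) assms(1)] lfun_vertex_point[OF assms(2) ij] u_pos t_pos
        lfun_add3[of n c "fst a" "fst g" "fst h" "snd a" "snd g" "snd h"]
      by simp
  qed
  then show ?thesis using vertex_point_in_Lift[OF assms(2) ij] unfolding maxface_def by blast
qed

lemma cell_maximal:
  assumes cover: "{1..n} \<subseteq> argmax_set n \<alpha> (real u) c \<union> argmax_set n \<beta> (- real t) c"
    and one: "1 \<in> argmax_set n \<alpha> (real u) c" "1 \<in> argmax_set n \<beta> (- real t) c"
    and B: "B \<in> Bs" "\<forall>B'\<in>Bs. sum c B' \<le> sum c B"
    and sub: "cell n Bs \<alpha> \<beta> u t c \<subseteq> cell n Bs \<alpha> \<beta> u t c'"
  shows "cell n Bs \<alpha> \<beta> u t c' = cell n Bs \<alpha> \<beta> u t c"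
proof -
  let ?L = "Lift n Bs \<alpha> \<beta> u t" and ?Z = "vertex_point B"
  have in_c: "?Z i j \<in> maxface n c ?L"
    if "i \<in> argmax_set n \<alpha> (real u) c" "j \<in> argmax_set n \<beta> (- real t) c" for i j
    using vertex_point_maxface[OF B(2,1) that] .
  have in_c': "?Z i j \<in> maxface n c' ?L"
    if "i \<in> argmax_set n \<alpha> (real u) c" "j \<in> argmax_set n \<beta> (- real t) c" for i j
  proof -
    have "fst (?Z i j) \<in> cell n Bs \<alpha> \<beta> u t c'" using in_c[OF that] sub unfolding cell_def by blast
    then obtain z' where "z' \<in> maxface n c' ?L" "fst (?Z i j) = fst z'" unfolding cell_def by blast
    then show ?thesis using maxface_of_same_projection[OF in_c[OF that]] by blast
  qed
  have one_n: "(1::nat) \<in> {1..n}" using n_pos by simp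
  have shift: "c' i = c i + (c' 1 - c 1)" if i: "i \<in> {1..n}" for i
  proof (cases "i \<in> argmax_set n \<alpha> (real u) c")
    case True
    have "real u * d i - \<alpha> i = real u * d 1 - \<alpha> 1" if "d = c \<or> d = c'" for d
    proof -
      have "lfun n d (?Z i 1) = lfun n d (?Z 1 1)"
        using that maxface_lfun_eq in_c[OF True one(2)] in_c[OF one] in_c'[OF True one(2)] in_c'[OF one]
        by blast
      then show ?thesis using lfun_vertex_point[OF B(1) i one_n] lfun_vertex_point[OF B(1) one_n one_n]
        by simp
    qed
    from this[of c] this[of c'] have "real u * (c' i - c i - (c' 1 - c 1)) = 0"
      unfolding right_diff_distrib by simp
    then show ?thesis using u_pos by simp
  next
    case False
    then have j: "i \<in> argmax_set n \<beta> (- real t) c" using cover i by blast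
    have "- real t * d i - \<beta> i = - real t * d 1 - \<beta> 1" if "d = c \<or> d = c'" for d
    proof -
      have "lfun n d (?Z 1 i) = lfun n d (?Z 1 1)"
        using that maxface_lfun_eq in_c[OF one(1) j] in_c[OF one] in_c'[OF one(1) j] in_c'[OF one]
        by blast
      then show ?thesis using lfun_vertex_point[OF B(1) one_n i] lfun_vertex_point[OF B(1) one_n one_n]
        by simp
    qed
    from this[of c] this[of c'] have "real t * (c' i - c i - (c' 1 - c 1)) = 0"
      unfolding right_diff_distrib by simp
    then show ?thesis using t_pos by simp
  qed
  have "maxface n c' ?L = maxface n c ?L" using shift by (intro maxface_Lift_shift) blast
  then show ?thesis unfolding cell_def by simp
qed

end

section \<open>Points of the faces T\<close>

definition mixed_point :: "nat \<Rightarrow> nat \<Rightarrow> nat \<Rightarrow> nat set \<Rightarrow> (nat \<Rightarrow> real) \<Rightarrow> (nat \<Rightarrow> real) \<Rightarrow> nat \<Rightarrow> real" where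
  "mixed_point n u t B l m = (\<lambda>j. indvec B j + (scaled_vec n (real u) l j + scaled_vec n (- real t) m j))"

definition lift_height :: "nat \<Rightarrow> (nat \<Rightarrow> real) \<Rightarrow> (nat \<Rightarrow> real) \<Rightarrow> (nat \<Rightarrow> real) \<Rightarrow> (nat \<Rightarrow> real) \<Rightarrow> real" where
  "lift_height n \<alpha> \<beta> l m = (\<Sum>i\<in>{1..n}. l i * \<alpha> i) + (\<Sum>i\<in>{1..n}. m i * \<beta> i)"

lemma dotp_mixed_point:
  assumes "B \<subseteq> {1..n}"
  shows "dotp n c (mixed_point n u t B l m) = sum c B + (\<Sum>i\<in>{1..n}. l i * (real u * c i - \<alpha> i))
     + (\<Sum>i\<in>{1..n}. m i * (- real t * c i - \<beta> i)) + lift_height n \<alpha> \<beta> l m"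
proof -
  have "dotp n c (scaled_vec n s w) = (\<Sum>i\<in>{1..n}. w i * (s * c i - \<gamma> i)) + (\<Sum>i\<in>{1..n}. w i * \<gamma> i)"
    for s w \<gamma>
    using lfun_scaled_vec[of n c s w \<gamma>] by (simp add: lfun_eq_dotp)
  from this[of "real u" l \<alpha>] this[of "- real t" m \<beta>] show ?thesis
    unfolding mixed_point_def lift_height_def dotp_add3 dotp_indvec[OF assms] by simp
qed

context mixed_subdivision
begin

lemma Tface_eq:
  assumes "insert 1 X \<subseteq> {1..n}" "insert 1 Y \<subseteq> {1..n}"
  shows "Tface u t X Y B =
    {mixed_point n u t B l m | l m. prob_vec n (insert 1 X) l \<and> prob_vec n (insert 1 Y) m}"
proof -
  have u0: "real u \<noteq> 0" and t0: "- real t \<noteq> 0" using u_pos t_pos by auto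
  have "Tface u t X Y B = {(\<lambda>i. indvec B i + (a i + b i)) | a b.
      a \<in> sdelta (real u) (insert 1 X) \<and> b \<in> sdelta (- real t) (insert 1 Y)}"
    unfolding Tface_def msum_def
  proof (intro equalityI subsetI)
    fix x assume "x \<in> {\<lambda>i. indvec B i + (a i + b i) | a b.
      a \<in> sdelta (real u) (insert 1 X) \<and> b \<in> sdelta (- real t) (insert 1 Y)}"
    then obtain a b where "x = (\<lambda>i. indvec B i + (a i + b i))"
      "a \<in> sdelta (real u) (insert 1 X)" "b \<in> sdelta (- real t) (insert 1 Y)" by blast
    then show "x \<in> {\<lambda>i. x i + y i |x y. x \<in> {indvec B} \<and> y \<in> {\<lambda>i. x i + y i |x y.
      x \<in> sdelta (real u) (insert 1 X) \<and> y \<in> sdelta (- real t) (insert 1 Y)}}"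
      by (intro CollectI exI[of _ "indvec B"] exI[of _ "\<lambda>i. a i + b i"]) blast
  qed blast
  also have "\<dots> = {mixed_point n u t B l m | l m. prob_vec n (insert 1 X) l \<and> prob_vec n (insert 1 Y) m}"
    unfolding mixed_point_def sdelta_eq[OF u0 assms(1)] sdelta_eq[OF t0 assms(2)] by blast
  finally show ?thesis .
qed

text \<open>A point lifted through the lower face of c is the lowest lift of its projection; a lift of
  the same height must use the same basis and stay inside the maximizing sets.\<close>

lemma mixed_point_height_le:
  assumes U: "unique_max_basis Bs c B" and B': "B' \<in> Bs"
    and l: "prob_vec n (argmax_set n \<alpha> (real u) c) l" and m: "prob_vec n (argmax_set n \<beta> (- real t) c) m"
    and l': "prob_vec n {1..n} l'" and m': "prob_vec n {1..n} m'"
    and p: "mixed_point n u t B l m = mixed_point n u t B' l' m'"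
  shows "lift_height n \<alpha> \<beta> l m \<le> lift_height n \<alpha> \<beta> l' m'"
    and "lift_height n \<alpha> \<beta> l m = lift_height n \<alpha> \<beta> l' m' \<Longrightarrow>
       B' = B \<and> prob_vec n (argmax_set n \<alpha> (real u) c) l' \<and> prob_vec n (argmax_set n \<beta> (- real t) c) m'"
proof -
  obtain i0 where i0: "i0 \<in> argmax_set n \<alpha> (real u) c" using argmax_set_nonempty[OF n_pos] .
  obtain j0 where j0: "j0 \<in> argmax_set n \<beta> (- real t) c" using argmax_set_nonempty[OF n_pos] .
  let ?v = "\<lambda>w. \<Sum>i\<in>{1..n}. w i * (real u * c i - \<alpha> i)"
    and ?w = "\<lambda>w. \<Sum>i\<in>{1..n}. w i * (- real t * c i - \<beta> i)"
  have B: "B \<in> Bs" using U unfolding unique_max_basis_def by blast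
  have vl: "?v l = real u * c i0 - \<alpha> i0" and wm: "?w m = - real t * c j0 - \<beta> j0"
    using prob_vec_value_eq_argmax_iff[OF prob_vec_full[OF l] i0] prob_vec_value_eq_argmax_iff[OF prob_vec_full[OF m] j0]
      l m by auto
  have vl': "?v l' \<le> real u * c i0 - \<alpha> i0" and wm': "?w m' \<le> - real t * c j0 - \<beta> j0"
    using prob_vec_value_le_argmax[OF l' i0] prob_vec_value_le_argmax[OF m' j0] .
  have sB': "sum c B' \<le> sum c B" using unique_max_basis_le[OF U B'] .
  have "dotp n c (mixed_point n u t B l m) = dotp n c (mixed_point n u t B' l' m')" using p by simp
  then have eq: "sum c B + ?v l + ?w m + lift_height n \<alpha> \<beta> l m = sum c B' + ?v l' + ?w m' + lift_height n \<alpha> \<beta> l' m'"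
    using dotp_mixed_point[OF bases_subset[OF matroid B], of c u t l m \<alpha> \<beta>]
      dotp_mixed_point[OF bases_subset[OF matroid B'], of c u t l' m' \<alpha> \<beta>] by simp
  show "lift_height n \<alpha> \<beta> l m \<le> lift_height n \<alpha> \<beta> l' m'" using eq vl wm vl' wm' sB' by linarith
  assume "lift_height n \<alpha> \<beta> l m = lift_height n \<alpha> \<beta> l' m'"
  then have "sum c B' = sum c B" "?v l' = real u * c i0 - \<alpha> i0" "?w m' = - real t * c j0 - \<beta> j0"
    using eq vl wm vl' wm' sB' by linarith+
  then show "B' = B \<and> prob_vec n (argmax_set n \<alpha> (real u) c) l' \<and> prob_vec n (argmax_set n \<beta> (- real t) c) m'"
    using U B' prob_vec_value_eq_argmax_iff[OF l' i0] prob_vec_value_eq_argmax_iff[OF m' j0]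
    unfolding unique_max_basis_def by force
qed

end

section \<open>Top-degree faces\<close>

text \<open>Up to an additive constant, the functional whose lower face is
  u Delta_{1 \<union> X} + e_B + t Nabla_{1 \<union> Y}: on X it equalizes the heights alpha, elsewhere
  the heights beta (its value at 1 is 0 because 1 is not in X).\<close>

definition partition_functional :: "nat \<Rightarrow> nat \<Rightarrow> (nat \<Rightarrow> real) \<Rightarrow> (nat \<Rightarrow> real) \<Rightarrow> nat set \<Rightarrow> nat \<Rightarrow> real" where
  "partition_functional u t \<alpha> \<beta> X i = (if i \<in> X then (\<alpha> i - \<alpha> 1) / real u else (\<beta> 1 - \<beta> i) / real t)"

locale generic_mixed_subdivision = mixed_subdivision +
  assumes \<alpha>_mono: "strict_mono_on {1..n} \<alpha>" and \<beta>_mono: "strict_mono_on {1..n} \<beta>"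
begin

abbreviation pf :: "nat set \<Rightarrow> nat \<Rightarrow> real" where
  "pf \<equiv> partition_functional u t \<alpha> \<beta>"

lemma heights_less:
  assumes "i \<in> {1..n}" "k \<in> {1..n}" "i < k"
  shows "\<alpha> i < \<alpha> k" "\<beta> i < \<beta> k"
  using assms \<alpha>_mono \<beta>_mono by (auto intro: strict_mono_onD)

lemma argmax_set_partition_functional:
  assumes "X \<union> Y = {2..n}" "X \<inter> Y = {}"
  shows "argmax_set n \<alpha> (real u) (pf X) = insert 1 X"
    and "argmax_set n \<beta> (- real t) (pf X) = insert 1 Y"
proof -
  have gap: "\<alpha> 1 < \<alpha> i" "\<beta> 1 < \<beta> i" if "i \<in> {2..n}" for i
    using heights_less[of 1 i] that by auto
  have "X \<subseteq> {2..n}" "Y \<subseteq> {2..n}" using assms(1) by blast+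
  note sub = insert_one_subset[OF assms(1)]
  show "argmax_set n \<alpha> (real u) (pf X) = insert 1 X"
  proof (rule argmax_set_eqI[where M = "- \<alpha> 1"])
    fix i assume "i \<in> {1..n} - insert 1 X"
    then have "i \<in> Y" "i \<notin> X" using assms by auto
    moreover have "real u * ((\<beta> 1 - \<beta> i) / real t) \<le> 0"
      using gap[of i] \<open>i \<in> Y\<close> \<open>Y \<subseteq> {2..n}\<close> t_pos
      by (intro mult_nonneg_nonpos divide_nonpos_pos) (auto intro: less_imp_le)
    ultimately show "real u * pf X i - \<alpha> i < - \<alpha> 1"
      using gap[of i] assms by (auto simp: partition_functional_def)
  qed (use sub assms u_pos in \<open>auto simp: partition_functional_def\<close>)
  show "argmax_set n \<beta> (- real t) (pf X) = insert 1 Y"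
  proof (rule argmax_set_eqI[where M = "- \<beta> 1"])
    fix i assume "i \<in> {1..n} - insert 1 Y"
    then have "i \<in> X" "i \<in> {2..n}" using assms by auto
    moreover have "real t * ((\<alpha> i - \<alpha> 1) / real u) \<ge> 0"
      using gap[of i] \<open>i \<in> X\<close> \<open>X \<subseteq> {2..n}\<close> u_pos
      by (intro mult_nonneg_nonneg divide_nonneg_pos) (auto intro: less_imp_le)
    ultimately show "- real t * pf X i - \<beta> i < - \<beta> 1"
      using gap(2)[of i] by (simp add: partition_functional_def)
  qed (use sub assms t_pos in \<open>auto simp: partition_functional_def\<close>)
qed

lemma partition_functional_of_argmax:
  assumes "X \<union> Y = {2..n}" "X \<inter> Y = {}"
    and A: "argmax_set n \<alpha> (real u) c = insert 1 X" and C: "argmax_set n \<beta> (- real t) c = insert 1 Y"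
    and i: "i \<in> {1..n}"
  shows "c i = c 1 + pf X i"
proof -
  have "i \<in> insert 1 X \<or> i \<in> Y" using i assms(1) by force
  then show ?thesis
  proof
    assume "i \<in> insert 1 X"
    then have "real u * c i - \<alpha> i = real u * c 1 - \<alpha> 1"
      using argmax_set_iff_eq[of 1 n \<alpha> "real u" c i] A i by simp
    moreover have "real u * pf X i = \<alpha> i - \<alpha> 1"
      using \<open>i \<in> insert 1 X\<close> u_pos by (auto simp: partition_functional_def)
    ultimately have "real u * (c i - (c 1 + pf X i)) = 0" by (simp add: algebra_simps)
    then show ?thesis using u_pos by simp
  next
    assume "i \<in> Y"
    then have "- real t * c i - \<beta> i = - real t * c 1 - \<beta> 1"
      using argmax_set_iff_eq[of 1 n \<beta> "- real t" c i] C i by simp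
    moreover have "real t * pf X i = \<beta> 1 - \<beta> i"
      using \<open>i \<in> Y\<close> assms(2) t_pos by (auto simp: partition_functional_def)
    ultimately have "real t * (c i - (c 1 + pf X i)) = 0" by (simp add: algebra_simps)
    then show ?thesis using t_pos by simp
  qed
qed

text \<open>Whether e precedes f under the functional of X depends only on one of the two memberships:
  on X the values increase from 0, off X they decrease from 0.\<close>

lemma partition_functional_less_iff:
  assumes "X \<subseteq> {2..n}" "e \<in> {1..n}" "f \<in> {1..n}"
  shows "e < f \<Longrightarrow> pf X e < pf X f \<longleftrightarrow> f \<in> X"
    and "f < e \<Longrightarrow> pf X e < pf X f \<longleftrightarrow> e \<notin> X"
proof -
  have a: "(\<alpha> i - \<alpha> 1) / real u < (\<alpha> k - \<alpha> 1) / real u"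
    and b: "(\<beta> 1 - \<beta> k) / real t < (\<beta> 1 - \<beta> i) / real t"
    if "i \<in> {1..n}" "k \<in> {1..n}" "i < k" for i k
    using heights_less[OF that] u_pos t_pos by (simp_all add: divide_strict_right_mono)
  have a0: "0 \<le> (\<alpha> i - \<alpha> 1) / real u" and b0: "(\<beta> 1 - \<beta> i) / real t \<le> 0" if "i \<in> {1..n}" for i
    using a[OF _ that, of 1] b[OF _ that, of 1] that by (cases "i = 1"; force)+
  have 1: "1 \<notin> X" using assms(1) by auto
  show "e < f \<Longrightarrow> pf X e < pf X f \<longleftrightarrow> f \<in> X"
    using a[OF assms(2,3)] b[OF assms(2,3)] a0[OF assms(2)] b0[OF assms(2)] a0[OF assms(3)] b0[OF assms(3)]
      a[of 1 f] b[of 1 e] 1 assms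
    unfolding partition_functional_def by (cases "e \<in> X"; cases "f \<in> X"; force)
  show "f < e \<Longrightarrow> pf X e < pf X f \<longleftrightarrow> e \<notin> X"
    using a[OF assms(3,2)] b[OF assms(3,2)] a0[OF assms(2)] b0[OF assms(2)] a0[OF assms(3)] b0[OF assms(3)]
      a[of 1 e] b[of 1 f] 1 assms
    unfolding partition_functional_def by (cases "e \<in> X"; cases "f \<in> X"; force)
qed

lemma partition_functional_less_combine:
  assumes XY: "X1 \<union> Y1 = {2..n}" "X2 \<union> Y2 = {2..n}" "X3 \<union> Y3 = {2..n}" "X3 \<inter> Y3 = {}"
    and X: "X1 \<inter> X2 \<subseteq> X3" and Y: "Y1 \<inter> Y2 \<subseteq> Y3"
    and ef: "e \<in> {1..n}" "f \<in> {1..n}"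
    and lt: "pf X1 e < pf X1 f" "pf X2 e < pf X2 f"
  shows "pf X3 e < pf X3 f"
proof -
  have sub: "X1 \<subseteq> {2..n}" "X2 \<subseteq> {2..n}" "X3 \<subseteq> {2..n}" using XY(1-3) by blast+
  note iff = partition_functional_less_iff[OF _ ef]
  show ?thesis
  proof (cases e f rule: linorder_cases)
    case less
    then have "f \<in> X1" "f \<in> X2" using iff(1)[OF sub(1)] iff(1)[OF sub(2)] lt by blast+
    then show ?thesis using iff(1)[OF sub(3) less] X by blast
  next
    case greater
    then have "e \<notin> X1" "e \<notin> X2" using iff(2)[OF sub(1)] iff(2)[OF sub(2)] lt by blast+
    moreover have "e \<in> {2..n}" using greater ef by auto
    ultimately have "e \<in> Y3" using XY(1,2) Y by blast
    then show ?thesis using iff(2)[OF sub(3) greater] XY(4) by blast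
  qed (use lt in simp)
qed

lemma is_T_iff:
  assumes XY: "X \<union> Y = {2..n}" "X \<inter> Y = {}"
  shows "is_T n Bs \<alpha> \<beta> u t X Y B \<longleftrightarrow> unique_max_basis Bs (pf X) B"
proof
  assume "is_T n Bs \<alpha> \<beta> u t X Y B"
  then obtain c where B: "B \<in> Bs" and F: "sdelta (real u) (insert 1 X) = cellF n \<alpha> u c"
    and G: "{indvec B} = cellG n Bs c" and H: "sdelta (- real t) (insert 1 Y) = cellH n \<beta> t c"
    unfolding is_T_def top_degree_face_def by blast
  note sub = insert_one_subset[OF XY(1)]
  have A: "argmax_set n \<alpha> (real u) c = insert 1 X"
    by (rule sdelta_inj[of "real u", OF _ argmax_set_subset sub(1)])
      (use F u_pos in \<open>simp_all add: cellF_eq\<close>)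
  have C: "argmax_set n \<beta> (- real t) c = insert 1 Y"
    by (rule sdelta_inj[of "- real t", OF _ argmax_set_subset sub(2)])
      (use H t_pos in \<open>simp_all add: cellH_eq\<close>)
  have "unique_max_basis Bs c B" using G[symmetric] cellG_eq_singleton_iff[OF matroid B] by blast
  moreover have "pf X i = c i + - c 1" if "i \<in> {1..n}" for i
    using partition_functional_of_argmax[OF XY A C that] by linarith
  ultimately show "unique_max_basis Bs (pf X) B" using unique_max_basis_shift[OF matroid] by blast
next
  assume U: "unique_max_basis Bs (pf X) B"
  have B: "B \<in> Bs" using U unfolding unique_max_basis_def by blast
  note A = argmax_set_partition_functional[OF XY]
  have le: "\<forall>B'\<in>Bs. sum (pf X) B' \<le> sum (pf X) B" using unique_max_basis_le[OF U] by blast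
  have cover: "{1..n} \<subseteq> insert 1 X \<union> insert 1 Y" using XY(1) by force
  have max: "cell n Bs \<alpha> \<beta> u t c' = cell n Bs \<alpha> \<beta> u t (pf X)"
    if "cell n Bs \<alpha> \<beta> u t (pf X) \<subseteq> cell n Bs \<alpha> \<beta> u t c'" for c'
    by (rule cell_maximal[OF _ _ _ B le that]) (use cover in \<open>simp_all add: A\<close>)
  have "cellF n \<alpha> u (pf X) = sdelta (real u) (insert 1 X)" "cellH n \<beta> t (pf X) = sdelta (- real t) (insert 1 Y)"
    by (simp_all add: cellF_eq cellH_eq A)
  moreover have "cellG n Bs (pf X) = {indvec B}" using cellG_eq_singleton_iff[OF matroid B] U by blast
  ultimately show "is_T n Bs \<alpha> \<beta> u t X Y B"
    unfolding is_T_def top_degree_face_def using B max indvec_in_matroid_polytope[OF matroid B]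
    by (intro conjI exI[of _ "pf X"]) auto
qed

lemma unique_max_basis_partition_functional_combine:
  assumes "X1 \<union> Y1 = {2..n}" "X2 \<union> Y2 = {2..n}" "X3 \<union> Y3 = {2..n}" "X3 \<inter> Y3 = {}"
    and "X1 \<inter> X2 \<subseteq> X3" "Y1 \<inter> Y2 \<subseteq> Y3"
    and U1: "unique_max_basis Bs (pf X1) B" and U2: "unique_max_basis Bs (pf X2) B"
  shows "unique_max_basis Bs (pf X3) B"
proof -
  have B: "B \<in> Bs" using U1 unfolding unique_max_basis_def by blast
  have "pf X3 e < pf X3 f" if "f \<in> B" "e \<notin> B" "insert e (B - {f}) \<in> Bs" for f e
  proof (rule partition_functional_less_combine[OF assms(1-6)])
    show "e \<in> {1..n}" "f \<in> {1..n}" using bases_subset[OF matroid] that B by blast+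
    show "pf X1 e < pf X1 f" "pf X2 e < pf X2 f"
      using U1 U2 unique_max_basis_iff_exchange[OF matroid B] that by blast+
  qed
  then show ?thesis using unique_max_basis_iff_exchange[OF matroid B] by blast
qed

lemma Tface_common_point:
  assumes "X1 \<union> Y1 = {2..n}" "X1 \<inter> Y1 = {}" "X2 \<union> Y2 = {2..n}" "X2 \<inter> Y2 = {}"
    and U1: "unique_max_basis Bs (pf X1) B1" and U2: "unique_max_basis Bs (pf X2) B2"
    and l1: "prob_vec n (insert 1 X1) l1" and m1: "prob_vec n (insert 1 Y1) m1"
    and l2: "prob_vec n (insert 1 X2) l2" and m2: "prob_vec n (insert 1 Y2) m2"
    and p: "mixed_point n u t B1 l1 m1 = mixed_point n u t B2 l2 m2"
  shows "B2 = B1 \<and> prob_vec n (insert 1 X1) l2 \<and> prob_vec n (insert 1 Y1) m2"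
proof -
  note A1 = argmax_set_partition_functional[OF assms(1,2)]
  note A2 = argmax_set_partition_functional[OF assms(3,4)]
  have B: "B1 \<in> Bs" "B2 \<in> Bs" using U1 U2 unfolding unique_max_basis_def by blast+
  note H12 = mixed_point_height_le[OF U1 B(2), unfolded A1, OF l1 m1 prob_vec_full[OF l2] prob_vec_full[OF m2] p]
  note H21 = mixed_point_height_le[OF U2 B(1), unfolded A2, OF l2 m2 prob_vec_full[OF l1] prob_vec_full[OF m1] p[symmetric]]
  show ?thesis using H12 H21 by (meson order.antisym)
qed

end

theorem mainTheorem9:
  fixes n u t :: nat and Bs :: "nat set set" and \<alpha> \<beta> :: "nat \<Rightarrow> real"
    and X1 Y1 X2 Y2 X3 Y3 B1 B2 :: "nat set" and p :: "nat \<Rightarrow> real"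
  assumes "1 \<le> n"
    and "matroid_bases n Bs"
    and "0 < \<alpha> 1" "strict_mono_on {1..n} \<alpha>"
    and "0 < \<beta> 1" "strict_mono_on {1..n} \<beta>"
    and "0 < u" "0 < t"
    and "X1 \<union> Y1 = {2..n}" "X1 \<inter> Y1 = {}"
    and "X2 \<union> Y2 = {2..n}" "X2 \<inter> Y2 = {}"
    and "X3 \<union> Y3 = {2..n}" "X3 \<inter> Y3 = {}"
    and "(X1, Y1) \<noteq> (X2, Y2)"
    and "is_T n Bs \<alpha> \<beta> u t X1 Y1 B1"
    and "is_T n Bs \<alpha> \<beta> u t X2 Y2 B2"
    and "p \<in> Tface u t X1 Y1 B1" "p \<in> Tface u t X2 Y2 B2"
    and "X1 \<inter> X2 \<subseteq> X3" "Y1 \<inter> Y2 \<subseteq> Y3"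
  shows "B1 = B2 \<and> is_T n Bs \<alpha> \<beta> u t X3 Y3 B1 \<and> p \<in> Tface u t X3 Y3 B1"
proof -
  interpret generic_mixed_subdivision n Bs \<alpha> \<beta> u t
    using assms by unfold_locales
  note sub = insert_one_subset[OF assms(9)] insert_one_subset[OF assms(11)] insert_one_subset[OF assms(13)]
  have U1: "unique_max_basis Bs (pf X1) B1" and U2: "unique_max_basis Bs (pf X2) B2"
    using assms(16,17) is_T_iff[OF assms(9,10)] is_T_iff[OF assms(11,12)] by blast+
  obtain l1 m1 where lm1: "prob_vec n (insert 1 X1) l1" "prob_vec n (insert 1 Y1) m1"
    "p = mixed_point n u t B1 l1 m1"
    using assms(18) Tface_eq[OF sub(1,2)] by blast
  obtain l2 m2 where lm2: "prob_vec n (insert 1 X2) l2" "prob_vec n (insert 1 Y2) m2"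
    "p = mixed_point n u t B2 l2 m2"
    using assms(19) Tface_eq[OF sub(3,4)] by blast
  have B21: "B2 = B1" and l2: "prob_vec n (insert 1 X1) l2" and m2: "prob_vec n (insert 1 Y1) m2"
    using Tface_common_point[OF assms(9-12) U1 U2 lm1(1,2) lm2(1,2)] lm1(3) lm2(3) by auto
  have "insert 1 X1 \<inter> insert 1 X2 \<subseteq> insert 1 X3" "insert 1 Y1 \<inter> insert 1 Y2 \<subseteq> insert 1 Y3"
    using assms(20,21) by auto
  then have "prob_vec n (insert 1 X3) l2" "prob_vec n (insert 1 Y3) m2"
    using prob_vec_mono[OF prob_vec_Int[OF l2 lm2(1)]] prob_vec_mono[OF prob_vec_Int[OF m2 lm2(2)]]
    by blast+
  then have "p \<in> Tface u t X3 Y3 B1" using Tface_eq[OF sub(5,6)] lm2(3) B21 by blast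
  moreover have "unique_max_basis Bs (pf X3) B1"
    using unique_max_basis_partition_functional_combine[OF assms(9,11,13,14,20,21) U1] U2 B21 by simp
  ultimately show ?thesis using is_T_iff[OF assms(13,14)] B21 by simp
qed

end
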